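(* Let $\mathcal{C}$ be a full SCW code with symbol set $\mathcal{S}=\{\eta_0,\dots,\eta_{L-1}\}$ and weight vector $\bar{\boldsymbol{\omega}}=[\bar\omega_0,\dots,\bar\omega_{L-1}]^{\mathsf T}$, with $K=\sum_{\ell}\bar\omega_\ell$. Fix any observation vector $\mathbf r\in\mathbb Z_{\ge 0}^K$. Then: (i) the set $\mathcal A(\mathbf r,\bar c_{\mathrm s},\bar c_{\mathrm n})=\arg\max_{\mathbf s\in\mathcal C} f_{\mathbf r}(\mathbf r\mid\bar{\mathbf c},\mathbf s)$ of coherent ML solutions is the same set $\mathcal A(\mathbf r)$ for every CSI $\bar{\mathbf c}=(\bar c_{\mathrm s},\bar c_{\mathrm n})\in(0,\infty)^2$, and for every probability density $f_{\bar{\mathbf c}}$ on $(0,\infty)^2$ the set of non-coherent ML solutions $\arg\max_{\mathbf s\in\mathcal C}\int\!\!\int f_{\mathbf r}(\mathbf r\mid\bar{\mathbf c},\mathbf s)f_{\bar{\mathbf c}}(\bar c_{\mathrm s},\bar c_{\mathrm n})\,\mathrm d\bar c_{\mathrm s}\,\mathrm d\bar c_{\mathrm n}$ equals the same set $\mathcal A(\mathbf r)$; in particular the ML solutions require neither instantaneous nor statistical CSI; (ii) for every permutation $\pi$ of $\{1,\dots,K\}$ with $r[\pi(1)]\le r[\pi(2)]\le\dots\le r[\pi(K)]$ (i.e., sorting $\mathbf r$ in ascending order with arbitrary tie-breaking), the sequence $\mathbf s$ defined by $s[\pi(j)]=\eta_\ell$ whenever $\sum_{\ell'<\ell}\bar\omega_{\ell'}<j\le\sum_{\ell'\le\ell}\bar\omega_{\ell'}$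 belongs to $\mathcal A(\mathbf r)$; (iii) in particular, for a full binary CW code with $\mathcal S=\{0,1\}$, length $K$ and weight $\omega$, any codeword whose $\omega$ entries equal to $1$ are located at the positions of $\omega$ largest entries of $\mathbf r$ belongs to $\mathcal A(\mathbf r)$.
   Context: Symbol set: $\mathcal S=\{\eta_0,\eta_1,\dots,\eta_{L-1}\}$ with $L\ge 2$, $0=\eta_0<\eta_1<\dots<\eta_{L-1}=1$. A codeword is $\mathbf s=[s[1],\dots,s[K]]^{\mathsf T}\in\mathcal S^K$. Channel model: given CSI $\bar{\mathbf c}=(\bar c_{\mathrm s},\bar c_{\mathrm n})$ with $\bar c_{\mathrm s}>0,\bar c_{\mathrm n}>0$, the observations $r[1],\dots,r[K]$ are independent with $r[k]$ Poisson of mean $s[k]\bar c_{\mathrm s}+\bar c_{\mathrm n}$, so the likelihood is $f_{\mathbf r}(\mathbf r\mid\bar{\mathbf c},\mathbf s)=\prod_{k=1}^K \frac{(\bar c_{\mathrm s}s[k]+\bar c_{\mathrm n})^{r[k]}e^{-\bar c_{\mathrm s}s[k]-\bar c_{\mathrm n}}}{r[k]!}$. An SCW (strongly constant-weight) code with weight vector $\bar{\boldsymbol\omega}\in\mathbb Z_{\ge0}^L$ is a codebook $\mathcal C\subseteq\mathcal S^K$, $K=\sum_\ell\bar\omega_\ell$, in which every codeword has exactly $\bar\omega_\ell$ entries equal to $\eta_\ell$ for each $\ell$; it is full if $\mathcal C$ contains all sequences in $\mathcal S^K$ with this property. A binary CW (constant-weight) code of length $K$ and weight $\omega$ is a codebook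 $\mathcal C\subseteq\{0,1\}^K$ in which every codeword has exactly $\omega$ ones; it is full if it contains all such sequences. *)

theory Defs
  imports "HOL-Analysis.Analysis"
begin

text \<open>Codewords are functions nat => real; the entries s 1, ..., s K are the
  symbols, entries outside 1..K are fixed to 0 (a normalisation convention).\<close>

definition code_length :: "nat \<Rightarrow> (nat \<Rightarrow> nat) \<Rightarrow> nat" where
  "code_length L w = (\<Sum>l<L. w l)"

definition full_SCW_code :: "(nat \<Rightarrow> real) \<Rightarrow> nat \<Rightarrow> (nat \<Rightarrow> nat) \<Rightarrow> (nat \<Rightarrow> real) set" where
  "full_SCW_code eta L w =
     {s. (\<forall>k. k \<notin> {1..code_length L w} \<longrightarrow> s k = 0)
       \<and> (\<forall>k\<in>{1..code_length L w}. s k \<in> eta ` {..<L})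
       \<and> (\<forall>l<L. card {k\<in>{1..code_length L w}. s k = eta l} = w l)}"

definition full_CW_code :: "nat \<Rightarrow> nat \<Rightarrow> (nat \<Rightarrow> real) set" where
  "full_CW_code K \<omega> =
     {s. (\<forall>k. k \<notin> {1..K} \<longrightarrow> s k = 0)
       \<and> (\<forall>k\<in>{1..K}. s k \<in> {0, 1})
       \<and> card {k\<in>{1..K}. s k = 1} = \<omega>}"

definition likelihood :: "nat \<Rightarrow> (nat \<Rightarrow> nat) \<Rightarrow> real \<Rightarrow> real \<Rightarrow> (nat \<Rightarrow> real) \<Rightarrow> real" where
  "likelihood K r cs cn s =
     (\<Prod>k\<in>{1..K}. (cs * s k + cn) ^ r k * exp (- cs * s k - cn) / fact (r k))"

definition argmax_set :: "'a set \<Rightarrow> ('a \<Rightarrow> real) \<Rightarrow> 'a set" where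
  "argmax_set C f = {s \<in> C. \<forall>s'\<in>C. f s' \<le> f s}"

definition pos_quadrant :: "(real \<times> real) set" where
  "pos_quadrant = {0<..} \<times> {0<..}"

definition pdf_pos_quadrant :: "(real \<times> real \<Rightarrow> real) \<Rightarrow> bool" where
  "pdf_pos_quadrant f \<longleftrightarrow>
     (\<forall>c\<in>pos_quadrant. 0 \<le> f c)
     \<and> set_integrable lborel pos_quadrant f
     \<and> (LINT c:pos_quadrant|lborel. f c) = 1"

definition nc_likelihood :: "nat \<Rightarrow> (nat \<Rightarrow> nat) \<Rightarrow> (real \<times> real \<Rightarrow> real) \<Rightarrow> (nat \<Rightarrow> real) \<Rightarrow> real" where
  "nc_likelihood K r f s =
     (LINT c:pos_quadrant|lborel. likelihood K r (fst c) (snd c) s * f c)"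

end

(*
  The log-likelihood of a codeword s at CSI (cs, cn) is the sum over k of r k * ln (cs * s k + cn)
  plus terms that depend only on the multiset of entries of s, and this multiset is the same
  for every codeword of a full SCW code. As x \<mapsto> ln (cs * x + cn) is strictly increasing, the
  rearrangement inequality shows that the maximisers are exactly the codewords similarly ordered
  with r (r i < r j implies s i \<le> s j): any other codeword is strictly improved by a swap of two
  entries, simultaneously for all CSI. This set does not depend on the CSI, and integrating the
  pointwise comparisons against a density shows that it is also the set of non-coherent maximisers.
  Filling the positions of r in ascending order with the symbols in ascending order produces
  such a codeword.
*)

theory Submission
  imports Defs
begin

definition similarly_ordered :: "'a set \<Rightarrow> ('a \<Rightarrow> real) \<Rightarrow> ('a \<Rightarrow> real) \<Rightarrow> bool" where
  "similarly_ordered I r s \<longleftrightarrow> (\<forall>i\<in>I. \<forall>j\<in>I. r i < r j \<longrightarrow> s i \<le> s j)"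

lemma similarly_ordered_comp:
  assumes "similarly_ordered I r s" "mono_on D g" "s ` I \<subseteq> D"
  shows "similarly_ordered I r (g \<circ> s)"
  using assms unfolding similarly_ordered_def by (auto intro!: mono_onD[OF assms(2)])

lemma count_image_mset_mset_set:
  "finite I \<Longrightarrow> count (image_mset s (mset_set I)) v = card {k\<in>I. s k = v}"
  by (simp add: count_image_mset Int_def conj_commute)

lemma image_mset_mset_set_eqI:
  assumes "finite I" "\<And>v. card {k\<in>I. s k = v} = card {k\<in>I. t k = v}"
  shows "image_mset s (mset_set I) = image_mset t (mset_set I)"
  using assms by (simp add: multiset_eq_iff count_image_mset_mset_set)

lemma sum_eq_if_image_mset_eq:
  assumes "image_mset s (mset_set I) = image_mset t (mset_set I)"
  shows "(\<Sum>k\<in>I. \<phi> (s k)) = (\<Sum>k\<in>I. \<phi> (t k))"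
  using arg_cong[OF assms, of "\<lambda>M. sum_mset (image_mset \<phi> M)"]
  by (simp add: sum_unfold_sum_mset image_mset.compositionality o_def)

lemma image_mset_mset_set_swap:
  assumes "finite I" "i \<in> I" "j \<in> I"
  shows "image_mset (x(i := x j, j := x i)) (mset_set I) = image_mset x (mset_set I)"
proof (cases "i = j")
  case False
  have I: "mset_set I = add_mset i (add_mset j (mset_set (I - {i} - {j})))"
    using assms False by (metis Diff_iff finite_Diff mset_set.remove singletonD)
  have "image_mset (x(i := x j, j := x i)) (mset_set (I - {i} - {j}))
      = image_mset x (mset_set (I - {i} - {j}))"
    using assms by (intro image_mset_cong) auto
  then show ?thesis using False by (simp add: I)
qed simp

lemma sum_mult_swap:
  fixes r x :: "'a \<Rightarrow> real"
  assumes "finite I" "i \<in> I" "j \<in> I"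
  shows "(\<Sum>k\<in>I. r k * (x(i := x j, j := x i)) k) = (\<Sum>k\<in>I. r k * x k) + (r i - r j) * (x j - x i)"
proof (cases "i = j")
  case False
  have "(\<Sum>k\<in>I. r k * (x(i := x j, j := x i)) k) - (\<Sum>k\<in>I. r k * x k)
      = (\<Sum>k\<in>I. r k * ((x(i := x j, j := x i)) k - x k))"
    by (simp add: sum_subtractf right_diff_distrib)
  also have "\<dots> = (\<Sum>k\<in>{i, j}. r k * ((x(i := x j, j := x i)) k - x k))"
    using assms by (intro sum.mono_neutral_right) auto
  also have "\<dots> = (r i - r j) * (x j - x i)"
    using False by (simp add: algebra_simps)
  finally show ?thesis by simp
qed simp

lemma similarly_ordered_obtain_max:
  fixes r s :: "'a \<Rightarrow> real"
  assumes "finite I" "I \<noteq> {}" "similarly_ordered I r s"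
  obtains p where "p \<in> I" "\<forall>k\<in>I. r k \<le> r p" "\<forall>k\<in>I. s k \<le> s p"
proof -
  have ex_max: "\<exists>m\<in>I. \<forall>k\<in>I. f k \<le> f m" for f :: "'a \<Rightarrow> real"
  proof -
    have "Max (f ` I) \<in> f ` I"
      using assms(1,2) by simp
    then obtain m where m: "m \<in> I" "f m = Max (f ` I)"
      by (metis imageE)
    have "f k \<le> f m" if "k \<in> I" for k
      using that m(2) assms(1) by simp
    then show ?thesis
      using m(1) by blast
  qed
  obtain m where m: "m \<in> I" "\<forall>k\<in>I. s k \<le> s m"
    using ex_max by blast
  obtain k0 where k0: "k0 \<in> I" "\<forall>k\<in>I. r k \<le> r k0"
    using ex_max by blast
  show ?thesis
  proof (cases "r k0 \<le> r m")
    case True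
    then show ?thesis using that[of m] m k0 by force
  next
    case False
    then have "s m \<le> s k0"
      using assms(3) m(1) k0(1) by (auto simp: similarly_ordered_def)
    then show ?thesis using that[of k0] m k0 by force
  qed
qed

lemma rearrangement_inequality:
  fixes r s t :: "'a \<Rightarrow> real"
  assumes "finite I" "similarly_ordered I r s"
    and "image_mset t (mset_set I) = image_mset s (mset_set I)"
  shows "(\<Sum>k\<in>I. r k * t k) \<le> (\<Sum>k\<in>I. r k * s k)"
  using assms
proof (induction I arbitrary: t rule: finite_remove_induct)
  case empty
  then show ?case by simp
next
  case (remove I)
  (* Move the largest entry of t to a position p of largest weight where s is largest,
     then compare the remaining positions by induction. *)
  obtain p where p: "p \<in> I" "\<forall>k\<in>I. r k \<le> r p" "\<forall>k\<in>I. s k \<le> s p"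
    using similarly_ordered_obtain_max[OF remove.hyps(1,2) remove.prems(1)] by blast
  have vals: "t ` I = s ` I"
    using arg_cong[OF remove.prems(2), of set_mset] remove.hyps(1) by simp
  then have "s p \<in> t ` I"
    using p(1) by simp
  then obtain q where q: "q \<in> I" "t q = s p"
    by (metis imageE)
  have t_le: "\<forall>k\<in>I. t k \<le> s p"
  proof
    fix k assume "k \<in> I"
    then have "t k \<in> s ` I" using vals by (metis imageI)
    then show "t k \<le> s p" using p(3) by auto
  qed
  define u where "u = t(p := t q, q := t p)"
  have "(\<Sum>k\<in>I. r k * t k) \<le> (\<Sum>k\<in>I. r k * u k)"
  proof -
    have "0 \<le> (r p - r q) * (t q - t p)"
      using p q t_le by (intro mult_nonneg_nonneg) auto
    then show ?thesis
      unfolding u_def using sum_mult_swap[OF remove.hyps(1) p(1) q(1), of r t] by simp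
  qed
  also have "\<dots> \<le> (\<Sum>k\<in>I. r k * s k)"
  proof -
    have I: "mset_set I = add_mset p (mset_set (I - {p}))"
      using remove.hyps(1) p(1) by (rule mset_set.remove)
    have "u p = s p" using q by (simp add: u_def)
    moreover have "image_mset u (mset_set I) = image_mset s (mset_set I)"
      using image_mset_mset_set_swap[OF remove.hyps(1) p(1) q(1), of t] remove.prems(2)
      by (simp add: u_def)
    ultimately have "image_mset u (mset_set (I - {p})) = image_mset s (mset_set (I - {p}))"
      by (simp add: I)
    moreover have "similarly_ordered (I - {p}) r s"
      using remove.prems(1) by (auto simp: similarly_ordered_def)
    ultimately have "(\<Sum>k\<in>I - {p}. r k * u k) \<le> (\<Sum>k\<in>I - {p}. r k * s k)"
      using remove.IH[OF p(1)] by blast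
    then show ?thesis
      using \<open>u p = s p\<close> by (simp add: sum.remove[OF remove.hyps(1) p(1)])
  qed
  finally show ?case .
qed

lemma likelihood_pos:
  assumes "0 \<le> cs" "0 < cn" "\<forall>k\<in>{1..K}. 0 \<le> s k"
  shows "0 < likelihood K r cs cn s"
  unfolding likelihood_def using assms by (intro prod_pos) (simp add: add_nonneg_pos)

lemma ln_likelihood:
  assumes "0 \<le> cs" "0 < cn" "\<forall>k\<in>{1..K}. 0 \<le> s k"
  shows "ln (likelihood K r cs cn s) = (\<Sum>k\<in>{1..K}. real (r k) * ln (cs * s k + cn))
           - (\<Sum>k\<in>{1..K}. cs * s k + cn) - (\<Sum>k\<in>{1..K}. ln (fact (r k)))"
proof -
  have pos: "0 < cs * s k + cn" if "k \<in> {1..K}" for k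
    using assms that by (simp add: add_nonneg_pos)
  have nonzero: "cs * s k + cn \<noteq> 0" if "k \<in> {1..K}" for k
    using pos[OF that] by simp
  have "ln (likelihood K r cs cn s)
      = (\<Sum>k\<in>{1..K}. ln ((cs * s k + cn) ^ r k * exp (- cs * s k - cn) / fact (r k)))"
    unfolding likelihood_def by (intro ln_prod) (auto simp: nonzero)
  also have "\<dots> = (\<Sum>k\<in>{1..K}. real (r k) * ln (cs * s k + cn) - (cs * s k + cn) - ln (fact (r k)))"
  proof (rule sum.cong[OF refl])
    fix k assume "k \<in> {1..K}"
    with pos[OF this] show "ln ((cs * s k + cn) ^ r k * exp (- cs * s k - cn) / fact (r k))
        = real (r k) * ln (cs * s k + cn) - (cs * s k + cn) - ln (fact (r k))"
      by (simp add: ln_mult ln_div ln_realpow)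
  qed
  finally show ?thesis by (simp add: sum_subtractf)
qed

lemma likelihood_le_if_similarly_ordered:
  assumes "0 < cs" "0 < cn" "\<forall>k\<in>{1..K}. 0 \<le> s k" "\<forall>k\<in>{1..K}. 0 \<le> t k"
    and "similarly_ordered {1..K} (\<lambda>k. real (r k)) s"
    and "image_mset t (mset_set {1..K}) = image_mset s (mset_set {1..K})"
  shows "likelihood K r cs cn t \<le> likelihood K r cs cn s"
proof -
  have cs_nonneg: "0 \<le> cs" using assms(1) by simp
  define g where "g x = ln (cs * x + cn)" for x
  have "mono_on {0..} g"
    unfolding g_def using assms(1,2)
    by (intro mono_onI ln_mono) (auto intro: add_nonneg_pos mult_left_mono)
  then have "similarly_ordered {1..K} (\<lambda>k. real (r k)) (g \<circ> s)"
    using assms(3,5) by (intro similarly_ordered_comp) auto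
  moreover have "image_mset (g \<circ> t) (mset_set {1..K}) = image_mset (g \<circ> s) (mset_set {1..K})"
    using assms(6) by (simp flip: image_mset.compositionality)
  ultimately have "(\<Sum>k\<in>{1..K}. real (r k) * g (t k)) \<le> (\<Sum>k\<in>{1..K}. real (r k) * g (s k))"
    using rearrangement_inequality[of "{1..K}" _ "g \<circ> s" "g \<circ> t"] by simp
  moreover have "(\<Sum>k\<in>{1..K}. cs * t k + cn) = (\<Sum>k\<in>{1..K}. cs * s k + cn)"
    using assms(6) by (rule sum_eq_if_image_mset_eq)
  ultimately have "ln (likelihood K r cs cn t) \<le> ln (likelihood K r cs cn s)"
    unfolding ln_likelihood[OF cs_nonneg assms(2,3)] ln_likelihood[OF cs_nonneg assms(2,4)]
    by (simp add: g_def)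
  then show ?thesis
    using likelihood_pos[OF cs_nonneg assms(2,3)] likelihood_pos[OF cs_nonneg assms(2,4)] by simp
qed

lemma likelihood_less_swap:
  assumes "0 < cs" "0 < cn" "\<forall>k\<in>{1..K}. 0 \<le> t k"
    and "i \<in> {1..K}" "j \<in> {1..K}" "r i < r j" "t j < t i"
  shows "likelihood K r cs cn t < likelihood K r cs cn (t(i := t j, j := t i))"
proof -
  have cs_nonneg: "0 \<le> cs" using assms(1) by simp
  define g where "g x = ln (cs * x + cn)" for x
  let ?u = "t(i := t j, j := t i)"
  have u_nonneg: "\<forall>k\<in>{1..K}. 0 \<le> ?u k" using assms(3-5) by simp
  have "g (t j) < g (t i)"
    unfolding g_def using assms by (intro ln_strict_mono) (auto intro: add_nonneg_pos)
  then have "0 < (real (r i) - real (r j)) * ((g \<circ> t) j - (g \<circ> t) i)"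
    using assms(6) by (intro mult_neg_neg) auto
  then have "(\<Sum>k\<in>{1..K}. real (r k) * g (t k)) < (\<Sum>k\<in>{1..K}. real (r k) * g (?u k))"
    using sum_mult_swap[OF _ assms(4,5), of "\<lambda>k. real (r k)" "g \<circ> t"]
    by (simp add: fun_upd_comp[symmetric])
  moreover have "(\<Sum>k\<in>{1..K}. cs * ?u k + cn) = (\<Sum>k\<in>{1..K}. cs * t k + cn)"
    by (rule sum_eq_if_image_mset_eq, rule image_mset_mset_set_swap) (use assms in auto)
  ultimately have "ln (likelihood K r cs cn t) < ln (likelihood K r cs cn ?u)"
    unfolding ln_likelihood[OF cs_nonneg assms(2,3)] ln_likelihood[OF cs_nonneg assms(2) u_nonneg]
    by (simp add: g_def)
  then show ?thesis
    using likelihood_pos[OF cs_nonneg assms(2,3)] likelihood_pos[OF cs_nonneg assms(2) u_nonneg] by simp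
qed

lemma power_div_fact_le_exp:
  fixes y :: real
  assumes "0 \<le> y"
  shows "y ^ n / fact n \<le> exp y"
proof -
  have sums: "(\<lambda>m. y ^ m /\<^sub>R fact m) sums exp y" by (rule exp_converges)
  have "(\<Sum>m\<in>{n}. y ^ m /\<^sub>R fact m) \<le> (\<Sum>m. y ^ m /\<^sub>R fact m)"
    using assms by (intro sum_le_suminf sums_summable[OF sums]) auto
  then show ?thesis using sums_unique[OF sums] by (simp add: divide_inverse_commute)
qed

lemma likelihood_le_one:
  assumes "0 \<le> cs" "0 \<le> cn" "\<forall>k\<in>{1..K}. 0 \<le> s k"
  shows "likelihood K r cs cn s \<le> 1"
  unfolding likelihood_def
proof (intro prod_le_1 conjI)
  fix k assume "k \<in> {1..K}"
  then have y: "0 \<le> cs * s k + cn" using assms by simp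
  then show "0 \<le> (cs * s k + cn) ^ r k * exp (- cs * s k - cn) / fact (r k)" by simp
  have "(cs * s k + cn) ^ r k * exp (- cs * s k - cn) / fact (r k)
      = (cs * s k + cn) ^ r k / fact (r k) * exp (- (cs * s k + cn))"
    by simp
  also have "\<dots> \<le> exp (cs * s k + cn) * exp (- (cs * s k + cn))"
    using power_div_fact_le_exp[OF y] by (intro mult_right_mono) auto
  also have "\<dots> = 1"
    by (simp flip: exp_add)
  finally show "(cs * s k + cn) ^ r k * exp (- cs * s k - cn) / fact (r k) \<le> 1" .
qed

lemma borel_measurable_likelihood:
  "(\<lambda>c. likelihood K r (fst c) (snd c) s) \<in> borel_measurable lborel"
proof -
  have "continuous_on UNIV (\<lambda>c::real \<times> real. likelihood K r (fst c) (snd c) s)"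
    unfolding likelihood_def by (intro continuous_intros) auto
  then show ?thesis
    by (simp add: borel_measurable_continuous_onI)
qed

lemma set_integrable_likelihood:
  assumes "pdf_pos_quadrant f" "\<forall>k\<in>{1..K}. 0 \<le> s k"
  shows "set_integrable lborel pos_quadrant (\<lambda>c. likelihood K r (fst c) (snd c) s * f c)"
proof (rule set_integrable_bound)
  show "set_integrable lborel pos_quadrant f"
    using assms(1) by (simp add: pdf_pos_quadrant_def)
  then have "(\<lambda>c. indicator pos_quadrant c * f c) \<in> borel_measurable lborel"
    by (simp add: set_integrable_def)
  from borel_measurable_times[OF borel_measurable_likelihood this]
  show "set_borel_measurable lborel pos_quadrant (\<lambda>c. likelihood K r (fst c) (snd c) s * f c)"
    unfolding set_borel_measurable_def by (simp add: mult.left_commute)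
  show "AE c in lborel. c \<in> pos_quadrant \<longrightarrow>
      norm (likelihood K r (fst c) (snd c) s * f c) \<le> norm (f c)"
  proof (rule AE_I2, rule impI)
    fix c :: "real \<times> real" assume "c \<in> pos_quadrant"
    then have "0 \<le> likelihood K r (fst c) (snd c) s" "likelihood K r (fst c) (snd c) s \<le> 1"
      using assms(2) likelihood_pos[of "fst c" "snd c" K s r] likelihood_le_one[of "fst c" "snd c" K s r]
      by (auto simp: pos_quadrant_def)
    then show "norm (likelihood K r (fst c) (snd c) s * f c) \<le> norm (f c)"
      by (simp add: abs_mult mult_left_le_one_le)
  qed
qed

lemma set_integral_pdf_pos:
  assumes f: "pdf_pos_quadrant f" and int: "set_integrable lborel pos_quadrant (\<lambda>c. d c * f c)"
    and d: "\<forall>c\<in>pos_quadrant. 0 < d c"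
  shows "0 < (LINT c:pos_quadrant|lborel. d c * f c)"
proof -
  let ?g = "\<lambda>c. indicator pos_quadrant c * (d c * f c)"
  have g_nonneg: "0 \<le> ?g c" for c
    using f d by (cases "c \<in> pos_quadrant") (auto simp: pdf_pos_quadrant_def less_imp_le)
  have "integral\<^sup>L lborel ?g \<noteq> 0"
  proof
    assume "integral\<^sup>L lborel ?g = 0"
    then have "AE c in lborel. ?g c = 0"
      using int g_nonneg by (subst (asm) integral_nonneg_eq_0_iff_AE) (auto simp: set_integrable_def)
    then have "AE c in lborel. indicator pos_quadrant c * f c = 0"
      by (rule AE_mp) (use d in \<open>auto intro!: AE_I2 simp: indicator_def\<close>)
    then have "(LINT c:pos_quadrant|lborel. f c) = 0"
      unfolding set_lebesgue_integral_def by (simp add: integral_eq_zero_AE)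
    then show False
      using f by (simp add: pdf_pos_quadrant_def)
  qed
  moreover have "0 \<le> integral\<^sup>L lborel ?g"
    using g_nonneg by (simp add: integral_nonneg_AE)
  ultimately show ?thesis
    by (simp add: set_lebesgue_integral_def)
qed

lemma nc_likelihood_mono:
  assumes "pdf_pos_quadrant f" "\<forall>k\<in>{1..K}. 0 \<le> s k" "\<forall>k\<in>{1..K}. 0 \<le> t k"
    and "\<forall>c\<in>pos_quadrant. likelihood K r (fst c) (snd c) t \<le> likelihood K r (fst c) (snd c) s"
  shows "nc_likelihood K r f t \<le> nc_likelihood K r f s"
  unfolding nc_likelihood_def
proof (rule set_integral_mono[OF set_integrable_likelihood set_integrable_likelihood])
  fix c assume "c \<in> pos_quadrant"
  then show "likelihood K r (fst c) (snd c) t * f c \<le> likelihood K r (fst c) (snd c) s * f c"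
    using assms unfolding pdf_pos_quadrant_def by (auto intro: mult_right_mono)
qed (use assms in auto)

lemma nc_likelihood_strict_mono:
  assumes "pdf_pos_quadrant f" "\<forall>k\<in>{1..K}. 0 \<le> s k" "\<forall>k\<in>{1..K}. 0 \<le> t k"
    and "\<forall>c\<in>pos_quadrant. likelihood K r (fst c) (snd c) t < likelihood K r (fst c) (snd c) s"
  shows "nc_likelihood K r f t < nc_likelihood K r f s"
proof -
  let ?d = "\<lambda>c. likelihood K r (fst c) (snd c) s - likelihood K r (fst c) (snd c) t"
  note int_s = set_integrable_likelihood[OF assms(1,2)]
    and int_t = set_integrable_likelihood[OF assms(1,3)]
  have "0 < (LINT c:pos_quadrant|lborel. ?d c * f c)"
    using set_integral_diff(1)[OF int_s int_t] assms(1,4)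
    by (intro set_integral_pdf_pos) (auto simp: left_diff_distrib)
  also have "(LINT c:pos_quadrant|lborel. ?d c * f c) = nc_likelihood K r f s - nc_likelihood K r f t"
    unfolding nc_likelihood_def using set_integral_diff(2)[OF int_s int_t]
    by (simp add: left_diff_distrib)
  finally show ?thesis by simp
qed

lemma argmax_set_eqI:
  assumes "\<And>s t. s \<in> C \<Longrightarrow> P s \<Longrightarrow> t \<in> C \<Longrightarrow> F t \<le> F s"
    and "\<And>s. s \<in> C \<Longrightarrow> \<not> P s \<Longrightarrow> \<exists>u\<in>C. F s < F u"
  shows "argmax_set C F = {s \<in> C. P s}"
  unfolding argmax_set_def using assms by (auto simp: not_le) (meson assms(2) not_le)

context
  fixes C :: "(nat \<Rightarrow> real) set" and K :: nat
  assumes code_nonneg: "\<forall>s\<in>C. \<forall>k\<in>{1..K}. 0 \<le> s k"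
    and code_same_entries: "\<forall>s\<in>C. \<forall>t\<in>C. image_mset t (mset_set {1..K}) = image_mset s (mset_set {1..K})"
begin

lemma similarly_ordered_likelihood_ge:
  assumes "s \<in> C" "t \<in> C" "similarly_ordered {1..K} (\<lambda>k. real (r k)) s" "0 < cs" "0 < cn"
  shows "likelihood K r cs cn t \<le> likelihood K r cs cn s"
  using assms code_nonneg code_same_entries[rule_format, OF assms(1,2)]
  by (intro likelihood_le_if_similarly_ordered) simp_all

lemma similarly_ordered_nc_likelihood_ge:
  assumes "s \<in> C" "t \<in> C" "similarly_ordered {1..K} (\<lambda>k. real (r k)) s" "pdf_pos_quadrant f"
  shows "nc_likelihood K r f t \<le> nc_likelihood K r f s"
proof (rule nc_likelihood_mono[OF assms(4)])
  show "\<forall>k\<in>{1..K}. 0 \<le> s k" "\<forall>k\<in>{1..K}. 0 \<le> t k"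
    using assms(1,2) code_nonneg by simp_all
  show "\<forall>c\<in>pos_quadrant. likelihood K r (fst c) (snd c) t \<le> likelihood K r (fst c) (snd c) s"
    using similarly_ordered_likelihood_ge[OF assms(1-3)] by (auto simp: pos_quadrant_def)
qed

lemma swap_increases_likelihood:
  assumes swap_closed: "\<forall>s\<in>C. \<forall>i\<in>{1..K}. \<forall>j\<in>{1..K}. s(i := s j, j := s i) \<in> C"
    and "s \<in> C" "\<not> similarly_ordered {1..K} (\<lambda>k. real (r k)) s"
  shows "\<exists>u\<in>C. \<forall>cs>0. \<forall>cn>0. likelihood K r cs cn s < likelihood K r cs cn u"
proof -
  obtain i j where ij: "i \<in> {1..K}" "j \<in> {1..K}" "r i < r j" "s j < s i"
    using assms(3) by (auto simp: similarly_ordered_def not_le)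
  have "s(i := s j, j := s i) \<in> C"
    using swap_closed assms(2) ij(1,2) by blast
  moreover have "likelihood K r cs cn s < likelihood K r cs cn (s(i := s j, j := s i))"
    if "0 < cs" "0 < cn" for cs cn
    using that code_nonneg assms(2) ij by (intro likelihood_less_swap) simp_all
  ultimately show ?thesis by blast
qed

lemma argmax_likelihood_eq:
  assumes "\<forall>s\<in>C. \<forall>i\<in>{1..K}. \<forall>j\<in>{1..K}. s(i := s j, j := s i) \<in> C" "0 < cs" "0 < cn"
  shows "argmax_set C (likelihood K r cs cn) = {s \<in> C. similarly_ordered {1..K} (\<lambda>k. real (r k)) s}"
proof (rule argmax_set_eqI)
  fix s assume "s \<in> C" "\<not> similarly_ordered {1..K} (\<lambda>k. real (r k)) s"
  then show "\<exists>u\<in>C. likelihood K r cs cn s < likelihood K r cs cn u"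
    using swap_increases_likelihood[OF assms(1)] assms(2,3) by blast
qed (simp add: similarly_ordered_likelihood_ge assms(2,3))

lemma argmax_nc_likelihood_eq:
  assumes "\<forall>s\<in>C. \<forall>i\<in>{1..K}. \<forall>j\<in>{1..K}. s(i := s j, j := s i) \<in> C" "pdf_pos_quadrant f"
  shows "argmax_set C (nc_likelihood K r f) = {s \<in> C. similarly_ordered {1..K} (\<lambda>k. real (r k)) s}"
proof (rule argmax_set_eqI)
  fix s assume s: "s \<in> C" "\<not> similarly_ordered {1..K} (\<lambda>k. real (r k)) s"
  then obtain u where u: "u \<in> C"
    "\<forall>cs>0. \<forall>cn>0. likelihood K r cs cn s < likelihood K r cs cn u"
    using swap_increases_likelihood[OF assms(1)] by blast
  have "nc_likelihood K r f s < nc_likelihood K r f u"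
  proof (rule nc_likelihood_strict_mono[OF assms(2)])
    show "\<forall>k\<in>{1..K}. 0 \<le> u k" "\<forall>k\<in>{1..K}. 0 \<le> s k"
      using code_nonneg s(1) u(1) by simp_all
    show "\<forall>c\<in>pos_quadrant. likelihood K r (fst c) (snd c) s < likelihood K r (fst c) (snd c) u"
      using u(2) by (auto simp: pos_quadrant_def)
  qed
  then show "\<exists>u\<in>C. nc_likelihood K r f s < nc_likelihood K r f u"
    using u(1) by blast
qed (simp add: similarly_ordered_nc_likelihood_ge assms(2))

end

lemma full_SCW_code_nonneg:
  assumes "eta 0 = 0" "strict_mono_on {..<L} eta" "s \<in> full_SCW_code eta L w"
    and "k \<in> {1..code_length L w}"
  shows "0 \<le> s k"
proof -
  have "s k \<in> eta ` {..<L}"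
    using assms(3,4) unfolding full_SCW_code_def by blast
  then obtain l where l: "l < L" "s k = eta l" by blast
  have "eta 0 \<le> eta l"
    using l(1) strict_mono_onD[OF assms(2), of 0 l] by (cases "l = 0") auto
  then show ?thesis using assms(1) l(2) by simp
qed

lemma full_SCW_code_same_entries:
  assumes "s \<in> full_SCW_code eta L w" "t \<in> full_SCW_code eta L w"
  shows "image_mset s (mset_set {1..code_length L w}) = image_mset t (mset_set {1..code_length L w})"
proof (rule image_mset_mset_set_eqI)
  fix v
  show "card {k\<in>{1..code_length L w}. s k = v} = card {k\<in>{1..code_length L w}. t k = v}"
  proof (cases "v \<in> eta ` {..<L}")
    case True
    then show ?thesis using assms by (auto simp: full_SCW_code_def)
  next
    case False
    then have "{k\<in>{1..code_length L w}. s k = v} = {}" "{k\<in>{1..code_length L w}. t k = v} = {}"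
      using assms unfolding full_SCW_code_def by blast+
    then show ?thesis by (simp only:)
  qed
qed simp

lemma full_SCW_code_swap_closed:
  assumes "s \<in> full_SCW_code eta L w" "i \<in> {1..code_length L w}" "j \<in> {1..code_length L w}"
  shows "s(i := s j, j := s i) \<in> full_SCW_code eta L w"
proof -
  have "count (image_mset (s(i := s j, j := s i)) (mset_set {1..code_length L w})) v
      = count (image_mset s (mset_set {1..code_length L w})) v" for v
    by (simp only: image_mset_mset_set_swap[OF finite_atLeastAtMost assms(2,3)])
  then have "card {k\<in>{1..code_length L w}. (s(i := s j, j := s i)) k = v}
      = card {k\<in>{1..code_length L w}. s k = v}" for v
    by (simp add: count_image_mset_mset_set)
  then show ?thesis
    using assms unfolding full_SCW_code_def by auto
qed

lemma full_SCW_code_argmax_likelihood: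
  assumes "eta 0 = 0" "strict_mono_on {..<L} eta" "0 < cs" "0 < cn"
  shows "argmax_set (full_SCW_code eta L w) (likelihood (code_length L w) r cs cn)
    = {s \<in> full_SCW_code eta L w. similarly_ordered {1..code_length L w} (\<lambda>k. real (r k)) s}"
  using full_SCW_code_nonneg[OF assms(1,2)] full_SCW_code_same_entries full_SCW_code_swap_closed assms(3,4)
  by (intro argmax_likelihood_eq) blast+

lemma full_SCW_code_argmax_nc_likelihood:
  assumes "eta 0 = 0" "strict_mono_on {..<L} eta" "pdf_pos_quadrant f"
  shows "argmax_set (full_SCW_code eta L w) (nc_likelihood (code_length L w) r f)
    = {s \<in> full_SCW_code eta L w. similarly_ordered {1..code_length L w} (\<lambda>k. real (r k)) s}"
  using full_SCW_code_nonneg[OF assms(1,2)] full_SCW_code_same_entries full_SCW_code_swap_closed assms(3)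
  by (intro argmax_nc_likelihood_eq) blast+

lemma full_CW_code_same_entries:
  assumes "s \<in> full_CW_code K \<omega>" "t \<in> full_CW_code K \<omega>"
  shows "image_mset s (mset_set {1..K}) = image_mset t (mset_set {1..K})"
proof (rule image_mset_mset_set_eqI)
  have zeros: "card {k\<in>{1..K}. u k = 0} = K - \<omega>" if "u \<in> full_CW_code K \<omega>" for u
  proof -
    have "{k\<in>{1..K}. u k = 0} = {1..K} - {k\<in>{1..K}. u k = 1}"
      using that by (force simp: full_CW_code_def)
    also have "card \<dots> = K - \<omega>"
      using that by (subst card_Diff_subset) (auto simp: full_CW_code_def)
    finally show ?thesis .
  qed
  fix v
  show "card {k\<in>{1..K}. s k = v} = card {k\<in>{1..K}. t k = v}"
  proof (cases "v \<in> {0, 1}")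
    case True
    then show ?thesis using assms zeros by (auto simp: full_CW_code_def)
  next
    case False
    then have "{k\<in>{1..K}. s k = v} = {}" "{k\<in>{1..K}. t k = v} = {}"
      using assms unfolding full_CW_code_def by blast+
    then show ?thesis by (simp only:)
  qed
qed simp

lemma full_CW_code_similarly_ordered:
  assumes "s \<in> full_CW_code K \<omega>" "{k\<in>{1..K}. s k = 1} = T"
    and "\<forall>i\<in>T. \<forall>j\<in>{1..K} - T. r j \<le> r i"
  shows "similarly_ordered {1..K} (\<lambda>k. real (r k)) s"
  unfolding similarly_ordered_def
proof (intro ballI impI)
  fix i j assume ij: "i \<in> {1..K}" "j \<in> {1..K}" "real (r i) < real (r j)"
  then have "\<not> (i \<in> T \<and> j \<notin> T)" using assms(3) by force
  moreover have "s i \<in> {0, 1}" "s j \<in> {0, 1}" using assms(1) ij by (auto simp: full_CW_code_def)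
  ultimately show "s i \<le> s j" using assms(2) ij by auto
qed

lemma full_CW_code_largest_positions_in_argmax:
  assumes "s \<in> full_CW_code K \<omega>" "{k\<in>{1..K}. s k = 1} = T"
    and "\<forall>i\<in>T. \<forall>j\<in>{1..K} - T. r j \<le> r i"
  shows "(\<forall>cs>0. \<forall>cn>0. s \<in> argmax_set (full_CW_code K \<omega>) (likelihood K r cs cn))
    \<and> (\<forall>f. pdf_pos_quadrant f \<longrightarrow> s \<in> argmax_set (full_CW_code K \<omega>) (nc_likelihood K r f))"
proof -
  have nonneg: "\<forall>s\<in>full_CW_code K \<omega>. \<forall>k\<in>{1..K}. 0 \<le> s k"
    unfolding full_CW_code_def by fastforce
  have same_entries: "\<forall>s\<in>full_CW_code K \<omega>. \<forall>t\<in>full_CW_code K \<omega>.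
      image_mset t (mset_set {1..K}) = image_mset s (mset_set {1..K})"
    using full_CW_code_same_entries by blast
  show ?thesis
    using assms(1) full_CW_code_similarly_ordered[OF assms] unfolding argmax_set_def
    by (auto intro: similarly_ordered_likelihood_ge[OF nonneg same_entries]
        similarly_ordered_nc_likelihood_ge[OF nonneg same_entries])
qed

lemma partial_sums_block_mono:
  fixes w :: "nat \<Rightarrow> nat"
  assumes "(\<Sum>l'<la. w l') < a" "a \<le> b" "b \<le> (\<Sum>l'\<le>lb. w l')"
  shows "la \<le> lb"
proof (rule ccontr)
  assume "\<not> la \<le> lb"
  then have "(\<Sum>l'\<le>lb. w l') \<le> (\<Sum>l'<la. w l')"
    by (intro sum_mono2) auto
  then show False using assms by linarith
qed

lemma partial_sums_block_exists:
  fixes w :: "nat \<Rightarrow> nat"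
  assumes "1 \<le> j" "j \<le> (\<Sum>l'<L. w l')"
  shows "\<exists>l<L. (\<Sum>l'<l. w l') < j \<and> j \<le> (\<Sum>l'\<le>l. w l')"
  using assms(2)
proof (induction L)
  case (Suc L)
  show ?case
  proof (cases "j \<le> (\<Sum>l'<L. w l')")
    case True
    then show ?thesis using Suc.IH by (meson less_SucI)
  next
    case False
    then show ?thesis using Suc.prems by (auto simp: lessThan_Suc_atMost)
  qed
qed (use assms(1) in simp)

context
  fixes eta :: "nat \<Rightarrow> real" and L :: nat and w :: "nat \<Rightarrow> nat" and \<pi> :: "nat \<Rightarrow> nat"
    and s :: "nat \<Rightarrow> real"
  assumes eta_mono: "strict_mono_on {..<L} eta"
    and \<pi>_bij: "bij_betw \<pi> {1..code_length L w} {1..code_length L w}"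
    and s_blocks: "\<forall>j\<in>{1..code_length L w}. \<forall>l<L.
      (\<Sum>l'<l. w l') < j \<and> j \<le> (\<Sum>l'\<le>l. w l') \<longrightarrow> s (\<pi> j) = eta l"
begin

lemma sorted_assignment_entry:
  assumes "j \<in> {1..code_length L w}"
  shows "\<exists>l<L. (\<Sum>l'<l. w l') < j \<and> j \<le> (\<Sum>l'\<le>l. w l') \<and> s (\<pi> j) = eta l"
  using partial_sums_block_exists[where j = j and L = L and w = w] assms s_blocks
  by (auto simp: code_length_def)

lemma sorted_assignment_in_full_SCW_code:
  assumes "\<forall>k. k \<notin> {1..code_length L w} \<longrightarrow> s k = 0"
  shows "s \<in> full_SCW_code eta L w"
proof -
  have \<pi>_image: "\<pi> ` {1..code_length L w} = {1..code_length L w}"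
    using \<pi>_bij by (simp add: bij_betw_def)
  have "s k \<in> eta ` {..<L}" if "k \<in> {1..code_length L w}" for k
  proof -
    have "k \<in> \<pi> ` {1..code_length L w}"
      using that \<pi>_image by simp
    then obtain j where j: "j \<in> {1..code_length L w}" "k = \<pi> j"
      by blast
    then show ?thesis using sorted_assignment_entry[OF j(1)] by auto
  qed
  moreover have "card {k\<in>{1..code_length L w}. s k = eta l} = w l" if l: "l < L" for l
  proof -
    let ?B = "{(\<Sum>l'<l. w l')<..(\<Sum>l'\<le>l. w l')}"
    have "(\<Sum>l'\<le>l. w l') \<le> code_length L w"
      unfolding code_length_def using l by (intro sum_mono2) auto
    then have B_sub: "?B \<subseteq> {1..code_length L w}" by auto
    have "{k\<in>{1..code_length L w}. s k = eta l} = \<pi> ` ?B"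
    proof (intro equalityI subsetI)
      fix k assume k: "k \<in> {k\<in>{1..code_length L w}. s k = eta l}"
      then have "k \<in> \<pi> ` {1..code_length L w}"
        using \<pi>_image by simp
      then obtain j where j: "j \<in> {1..code_length L w}" "k = \<pi> j"
        by blast
      have "s (\<pi> j) = eta l" using j(2) k by simp
      then obtain l' where l': "l' < L" "j \<in> {(\<Sum>l''<l'. w l'')<..(\<Sum>l''\<le>l'. w l'')}" "eta l' = eta l"
        using sorted_assignment_entry[OF j(1)] by auto
      have "l' = l"
        using inj_onD[OF strict_mono_on_imp_inj_on[OF eta_mono] l'(3)] l'(1) l by simp
      then show "k \<in> \<pi> ` ?B" using j(2) l'(2) by blast
    next
      fix k assume "k \<in> \<pi> ` ?B"
      then obtain j where j: "j \<in> ?B" "k = \<pi> j" by blast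
      then have "j \<in> {1..code_length L w}" using B_sub by blast
      moreover have "s (\<pi> j) = eta l" using s_blocks calculation j(1) l by simp
      moreover have "\<pi> j \<in> {1..code_length L w}"
        using bij_betwE[OF \<pi>_bij] calculation(1) by blast
      ultimately show "k \<in> {k\<in>{1..code_length L w}. s k = eta l}"
        using j(2) by simp
    qed
    moreover have "inj_on \<pi> ?B"
      using \<pi>_bij B_sub by (auto simp: bij_betw_def intro: inj_on_subset)
    ultimately show ?thesis
      by (simp add: card_image flip: lessThan_Suc_atMost)
  qed
  ultimately show ?thesis
    using assms by (simp add: full_SCW_code_def)
qed

lemma sorted_assignment_similarly_ordered:
  fixes r :: "nat \<Rightarrow> nat"
  assumes sorted: "\<forall>i j. 1 \<le> i \<and> i \<le> j \<and> j \<le> code_length L w \<longrightarrow> r (\<pi> i) \<le> r (\<pi> j)"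
  shows "similarly_ordered {1..code_length L w} (\<lambda>k. real (r k)) s"
  unfolding similarly_ordered_def
proof (intro ballI impI)
  fix x y assume "x \<in> {1..code_length L w}" "y \<in> {1..code_length L w}" and r_less: "real (r x) < real (r y)"
  then obtain a b where ab: "a \<in> {1..code_length L w}" "b \<in> {1..code_length L w}" "x = \<pi> a" "y = \<pi> b"
    using \<pi>_bij unfolding bij_betw_def by blast
  have "a < b"
  proof (rule ccontr)
    assume "\<not> a < b"
    then have "r (\<pi> b) \<le> r (\<pi> a)" using sorted ab(1,2) by auto
    then show False using r_less ab(3,4) by simp
  qed
  obtain la where la: "la < L" "(\<Sum>l'<la. w l') < a" "s x = eta la"
    using sorted_assignment_entry[OF ab(1)] ab(3) by blast
  obtain lb where lb: "lb < L" "b \<le> (\<Sum>l'\<le>lb. w l')" "s y = eta lb"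
    using sorted_assignment_entry[OF ab(2)] ab(4) by blast
  have "la \<le> lb"
    using partial_sums_block_mono[OF la(2) less_imp_le[OF \<open>a < b\<close>] lb(2)] .
  then show "s x \<le> s y"
    using la lb by (cases "la = lb") (auto intro!: less_imp_le strict_mono_onD[OF eta_mono])
qed

end

theorem theorem1:
  fixes eta :: "nat \<Rightarrow> real" and L :: nat and w :: "nat \<Rightarrow> nat" and r :: "nat \<Rightarrow> nat"
  assumes L2: "L \<ge> 2"
    and eta0: "eta 0 = 0"
    and eta_mono: "strict_mono_on {..<L} eta"
    and eta_last: "eta (L - 1) = 1"
  shows
    "(\<exists>A. (\<forall>cs>0. \<forall>cn>0.
              argmax_set (full_SCW_code eta L w) (likelihood (code_length L w) r cs cn) = A)
        \<and> (\<forall>f. pdf_pos_quadrant f \<longrightarrow>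
              argmax_set (full_SCW_code eta L w) (nc_likelihood (code_length L w) r f) = A)
        \<and> (\<forall>\<pi> s. bij_betw \<pi> {1..code_length L w} {1..code_length L w}
              \<and> (\<forall>i j. 1 \<le> i \<and> i \<le> j \<and> j \<le> code_length L w \<longrightarrow> r (\<pi> i) \<le> r (\<pi> j))
              \<and> (\<forall>j\<in>{1..code_length L w}. \<forall>l<L.
                    (\<Sum>l'<l. w l') < j \<and> j \<le> (\<Sum>l'\<le>l. w l') \<longrightarrow> s (\<pi> j) = eta l)
              \<and> (\<forall>k. k \<notin> {1..code_length L w} \<longrightarrow> s k = 0)
              \<longrightarrow> s \<in> A))
     \<and> (\<forall>(K::nat) (\<omega>::nat) (r'::nat \<Rightarrow> nat) s T.
          s \<in> full_CW_code K \<omega>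
          \<and> T \<subseteq> {1..K} \<and> card T = \<omega>
          \<and> (\<forall>i\<in>T. \<forall>j\<in>{1..K} - T. r' j \<le> r' i)
          \<and> {k\<in>{1..K}. s k = 1} = T
          \<longrightarrow> (\<forall>cs>0. \<forall>cn>0. s \<in> argmax_set (full_CW_code K \<omega>) (likelihood K r' cs cn))
            \<and> (\<forall>f. pdf_pos_quadrant f \<longrightarrow> s \<in> argmax_set (full_CW_code K \<omega>) (nc_likelihood K r' f)))"
proof -
  define A where "A = {s \<in> full_SCW_code eta L w. similarly_ordered {1..code_length L w} (\<lambda>k. real (r k)) s}"
  show ?thesis
  proof (intro conjI exI[of _ A] allI impI, goal_cases)
    case (1 cs cn)
    then show ?case unfolding A_def by (rule full_SCW_code_argmax_likelihood[OF eta0 eta_mono])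
  next
    case (2 f)
    then show ?case unfolding A_def by (rule full_SCW_code_argmax_nc_likelihood[OF eta0 eta_mono])
  next
    case (3 \<pi> s)
    then show ?case
      unfolding A_def using sorted_assignment_in_full_SCW_code[OF eta_mono, where \<pi> = \<pi> and s = s]
        sorted_assignment_similarly_ordered[OF eta_mono, where \<pi> = \<pi> and s = s and r = r] by blast
  next
    case (4 K \<omega> r' s T cs cn)
    then show ?case using full_CW_code_largest_positions_in_argmax[of s K \<omega> T r'] by blast
  next
    case (5 K \<omega> r' s T f)
    then show ?case using full_CW_code_largest_positions_in_argmax[of s K \<omega> T r'] by blast
  qed
qed

end
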